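(* Let $p\in[1,\infty]$, let $(\epsilon_n)_{n\ge1}$ be a sequence in $[0,\infty)^2$ converging to $(0,0)$, and let $X,Y$ be compact pmm-spaces. Then \[ \lim_{n\to\infty}\mathsf{PGW}_{\epsilon_n,p}(X,Y)=\mathsf{GW}_p(X,Y)=\lim_{n\to\infty}\mathsf{sPGW}_{\epsilon_n,p}(X,Y). \]
   Context: A pmm-space is a triple $(X,d_X,\mu_X)$ where $(X,d_X)$ is a complete separable metric space and $\mu_X$ a Borel probability measure; compact means $(X,d_X)$ compact. For a measure $\pi$ on $X\times Y$, $\pi_X,\pi_Y$ are its marginals. For $p<\infty$, $\|d_X-d_Y\|_{L^p(\pi\otimes\pi)}=\left(\iint|d_X(x,x')-d_Y(y,y')|^p\,d\pi(x,y)\,d\pi(x',y')\right)^{1/p}$; for $p=\infty$ it is the $\pi\otimes\pi$-essential supremum of $|d_X(x,x')-d_Y(y,y')|$. $\mathsf{GW}_p(X,Y)=\inf\|d_X-d_Y\|_{L^p(\pi\otimes\pi)}$ over Borel probability measures $\pi$ on $X\times Y$ with $\pi_X=\mu_X,\pi_Y=\mu_Y$. For $\epsilon=(\epsilon_1,\epsilon_2)$: $\mathcal{C}_\epsilon(\mu_X,\mu_Y)$ is the set of Borel probability measures $\pi$ on $X\times Y$ with $\pi_X\le(1+\epsilon_1)\mu_X$ and $\pi_Y\le(1+\epsilon_2)\mu_Y$ setwise on Borel sets; $\mathcal{S}_\epsilon(\mu_X,\mu_Y)$ is the set of Borel probability measures $\pi$ on $X\times Y$ such that $\pi_X,\mu_X$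 are mutually absolutely continuous with $\|d\pi_X/d\mu_X\|_{L^\infty(\mu_X)},\|d\mu_X/d\pi_X\|_{L^\infty(\pi_X)}\le1+\epsilon_1$, and $\pi_Y,\mu_Y$ are mutually absolutely continuous with $\|d\pi_Y/d\mu_Y\|_{L^\infty(\mu_Y)},\|d\mu_Y/d\pi_Y\|_{L^\infty(\pi_Y)}\le1+\epsilon_2$. $\mathsf{PGW}_{\epsilon,p}(X,Y)$ (resp. $\mathsf{sPGW}_{\epsilon,p}(X,Y)$) is the infimum of $\|d_X-d_Y\|_{L^p(\pi\otimes\pi)}$ over $\pi\in\mathcal{C}_\epsilon(\mu_X,\mu_Y)$ (resp. $\pi\in\mathcal{S}_\epsilon(\mu_X,\mu_Y)$). *)

theory Defs
  imports "HOL-Analysis.Analysis" "HOL-Probability.Probability"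
begin

text \<open>A pmm-space is modelled by a type of class polish_space (complete separable
metric space, metric dist) together with a Borel probability measure on it.\<close>

definition pmm_space :: "'a::polish_space measure \<Rightarrow> bool" where
  "pmm_space \<mu> \<longleftrightarrow> sets \<mu> = sets (borel :: 'a measure) \<and> prob_space \<mu>"

definition compact_pmm_space :: "'a::polish_space measure \<Rightarrow> bool" where
  "compact_pmm_space \<mu> \<longleftrightarrow> pmm_space \<mu> \<and> compact (UNIV :: 'a set)"

definition borel_prob :: "('a::polish_space \<times> 'b::polish_space) measure \<Rightarrow> bool" where
  "borel_prob \<pi> \<longleftrightarrow> sets \<pi> = sets (borel :: ('a \<times> 'b) measure) \<and> prob_space \<pi>"

definition marg1 :: "('a::polish_space \<times> 'b::polish_space) measure \<Rightarrow> 'a measure" where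
  "marg1 \<pi> = distr \<pi> borel fst"

definition marg2 :: "('a::polish_space \<times> 'b::polish_space) measure \<Rightarrow> 'b measure" where
  "marg2 \<pi> = distr \<pi> borel snd"

definition distortion :: "('a::polish_space \<times> 'b::polish_space) \<times> ('a \<times> 'b) \<Rightarrow> real" where
  "distortion z = \<bar>dist (fst (fst z)) (fst (snd z)) - dist (snd (fst z)) (snd (snd z))\<bar>"

text \<open>The L^p(pi (x) pi) norm of the distortion, for p in [1,infinity] (p :: ennreal,
p = top meaning infinity), valued in the extended reals.\<close>

definition Lp_distortion :: "('a::polish_space \<times> 'b::polish_space) measure \<Rightarrow> ennreal \<Rightarrow> ereal" where
  "Lp_distortion \<pi> p =
    (if p = \<top> then esssup (\<pi> \<Otimes>\<^sub>M \<pi>) (\<lambda>z. ereal (distortion z))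
     else (let I = (\<integral>\<^sup>+ z. ennreal (distortion z powr enn2real p) \<partial>(\<pi> \<Otimes>\<^sub>M \<pi>))
           in if I = \<top> then \<infinity> else ereal (enn2real I powr (1 / enn2real p))))"

definition couplings :: "'a::polish_space measure \<Rightarrow> 'b::polish_space measure \<Rightarrow> ('a \<times> 'b) measure set" where
  "couplings \<mu> \<nu> = {\<pi>. borel_prob \<pi> \<and> marg1 \<pi> = \<mu> \<and> marg2 \<pi> = \<nu>}"

definition GW :: "ennreal \<Rightarrow> 'a::polish_space measure \<Rightarrow> 'b::polish_space measure \<Rightarrow> ereal" where
  "GW p \<mu> \<nu> = (INF \<pi> \<in> couplings \<mu> \<nu>. Lp_distortion \<pi> p)"

definition C_eps :: "real \<times> real \<Rightarrow> 'a::polish_space measure \<Rightarrow> 'b::polish_space measure \<Rightarrow> ('a \<times> 'b) measure set" where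
  "C_eps \<epsilon> \<mu> \<nu> = {\<pi>. borel_prob \<pi> \<and>
      (\<forall>A \<in> sets (borel :: 'a measure). emeasure (marg1 \<pi>) A \<le> ennreal (1 + fst \<epsilon>) * emeasure \<mu> A) \<and>
      (\<forall>B \<in> sets (borel :: 'b measure). emeasure (marg2 \<pi>) B \<le> ennreal (1 + snd \<epsilon>) * emeasure \<nu> B)}"

text \<open>Mutual absolute continuity with both Radon-Nikodym derivatives essentially
bounded by c (the L-infinity norm bound is the a.e. bound of the RN derivative).\<close>

definition mutual_ac_bounded :: "'a measure \<Rightarrow> 'a measure \<Rightarrow> real \<Rightarrow> bool" where
  "mutual_ac_bounded \<rho> \<mu> c \<longleftrightarrow>
     absolutely_continuous \<mu> \<rho> \<and> absolutely_continuous \<rho> \<mu> \<and>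
     (AE x in \<mu>. RN_deriv \<mu> \<rho> x \<le> ennreal c) \<and>
     (AE x in \<rho>. RN_deriv \<rho> \<mu> x \<le> ennreal c)"

definition S_eps :: "real \<times> real \<Rightarrow> 'a::polish_space measure \<Rightarrow> 'b::polish_space measure \<Rightarrow> ('a \<times> 'b) measure set" where
  "S_eps \<epsilon> \<mu> \<nu> = {\<pi>. borel_prob \<pi> \<and>
      mutual_ac_bounded (marg1 \<pi>) \<mu> (1 + fst \<epsilon>) \<and>
      mutual_ac_bounded (marg2 \<pi>) \<nu> (1 + snd \<epsilon>)}"

definition PGW :: "real \<times> real \<Rightarrow> ennreal \<Rightarrow> 'a::polish_space measure \<Rightarrow> 'b::polish_space measure \<Rightarrow> ereal" where
  "PGW \<epsilon> p \<mu> \<nu> = (INF \<pi> \<in> C_eps \<epsilon> \<mu> \<nu>. Lp_distortion \<pi> p)"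

definition sPGW :: "real \<times> real \<Rightarrow> ennreal \<Rightarrow> 'a::polish_space measure \<Rightarrow> 'b::polish_space measure \<Rightarrow> ereal" where
  "sPGW \<epsilon> p \<mu> \<nu> = (INF \<pi> \<in> S_eps \<epsilon> \<mu> \<nu>. Lp_distortion \<pi> p)"

end

(*
  Since couplings \<subseteq> S_eps \<subseteq> C_eps, PGW \<le> sPGW \<le> GW for every \<epsilon>, so everything rests on
  the lower bound: if plans \<pi>_n \<in> C_eps(\<epsilon>_n) with \<epsilon>_n \<rightarrow> 0 have distortion at most T,
  then GW \<le> T. Cut X and Y into finitely many Borel cells of small diameter. By uniform
  continuity of the (powered) distortion on the compact space (X \<times> Y)\<^sup>2, the cost of any plan
  is determined up to \<omega> by the masses it gives to the product cells, for the L\<^sup>p cost through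
  a quadratic form in these masses, for the L\<^sup>\<infinity> cost through which cells carry mass. Along a
  subsequence the cell masses of \<pi>_n converge; because \<epsilon>_n \<rightarrow> 0 the limit has row and
  column sums at most the cell masses of \<mu>X and \<mu>Y, hence equal to them since all total 1.
  Spreading each limit mass over its product cell proportionally to \<mu>X \<otimes> \<mu>Y yields a genuine
  coupling with exactly these cell masses, and its cost is at most T + 2\<omega>.
*)

theory Submission
  imports Defs
begin

section \<open>Couplings, S_eps and C_eps\<close>

lemma sets_eq_borel_imp_space_UNIV:
  "sets M = sets (borel :: 'a::topological_space measure) \<Longrightarrow> space M = UNIV"
  by (metis sets_eq_imp_space_eq space_borel)

lemma compact_pmm_spaceD:
  fixes \<mu> :: "'a::polish_space measure"
  assumes "compact_pmm_space \<mu>"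
  shows "prob_space \<mu>" "sets \<mu> = sets borel" "compact (UNIV :: 'a set)"
  using assms unfolding compact_pmm_space_def pmm_space_def by auto

lemma sets_pair_measure_borel:
  assumes "sets M = sets (borel :: 'a::second_countable_topology measure)"
    and "sets N = sets (borel :: 'b::second_countable_topology measure)"
  shows "sets (M \<Otimes>\<^sub>M N) = sets (borel :: ('a \<times> 'b) measure)"
  using sets_pair_measure_cong[OF assms] by (simp only: borel_prod)

lemma sets_marg1 [simp]: "sets (marg1 \<pi>) = sets borel"
  by (simp add: marg1_def)

lemma sets_marg2 [simp]: "sets (marg2 \<pi>) = sets borel"
  by (simp add: marg2_def)

lemma AE_RN_deriv_self:
  assumes "sigma_finite_measure M"
  shows "AE x in M. RN_deriv M M x = 1"
proof -
  interpret sigma_finite_measure M by fact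
  have "AE x in M. (\<lambda>_. 1) x = RN_deriv M M x"
    by (rule RN_deriv_unique) (auto simp: density_1)
  then show ?thesis by auto
qed

lemma mutual_ac_bounded_refl:
  assumes "prob_space M" "1 \<le> c"
  shows "mutual_ac_bounded M M c"
proof -
  interpret prob_space M by fact
  have "AE x in M. RN_deriv M M x \<le> ennreal c"
    using AE_RN_deriv_self[OF sigma_finite_measure_axioms]
    by eventually_elim (use assms(2) in simp)
  then show ?thesis
    unfolding mutual_ac_bounded_def absolutely_continuous_def by auto
qed

lemma mutual_ac_bounded_emeasure_le:
  assumes "mutual_ac_bounded \<rho> \<mu> c" "sets \<rho> = sets \<mu>" "sigma_finite_measure \<mu>" "A \<in> sets \<mu>"
  shows "emeasure \<rho> A \<le> ennreal c * emeasure \<mu> A"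
proof -
  interpret sigma_finite_measure \<mu> by fact
  have ac: "absolutely_continuous \<mu> \<rho>" and bound: "AE x in \<mu>. RN_deriv \<mu> \<rho> x \<le> ennreal c"
    using assms(1) by (auto simp: mutual_ac_bounded_def)
  have "emeasure \<rho> A = emeasure (density \<mu> (RN_deriv \<mu> \<rho>)) A"
    using density_RN_deriv[OF ac assms(2)] by simp
  also have "\<dots> = (\<integral>\<^sup>+x. RN_deriv \<mu> \<rho> x * indicator A x \<partial>\<mu>)"
    using assms(4) by (simp add: emeasure_density)
  also have "\<dots> \<le> (\<integral>\<^sup>+x. ennreal c * indicator A x \<partial>\<mu>)"
    using bound by (intro nn_integral_mono_AE) (auto elim!: eventually_mono split: split_indicator)
  also have "\<dots> = ennreal c * emeasure \<mu> A"
    using assms(4) by (simp add: nn_integral_cmult)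
  finally show ?thesis .
qed

lemma couplings_subset_S_eps:
  assumes "0 \<le> fst \<epsilon>" "0 \<le> snd \<epsilon>" "prob_space \<mu>" "prob_space \<nu>"
  shows "couplings \<mu> \<nu> \<subseteq> S_eps \<epsilon> \<mu> \<nu>"
  using assms mutual_ac_bounded_refl[OF assms(3), of "1 + fst \<epsilon>"]
    mutual_ac_bounded_refl[OF assms(4), of "1 + snd \<epsilon>"]
  by (auto simp: couplings_def S_eps_def)

lemma S_eps_subset_C_eps:
  assumes "sets \<mu> = sets borel" "sets \<nu> = sets borel" "prob_space \<mu>" "prob_space \<nu>"
  shows "S_eps \<epsilon> \<mu> \<nu> \<subseteq> C_eps \<epsilon> \<mu> \<nu>"
  using assms prob_space_imp_sigma_finite[OF assms(3)] prob_space_imp_sigma_finite[OF assms(4)]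
    mutual_ac_bounded_emeasure_le[of "marg1 _" \<mu>] mutual_ac_bounded_emeasure_le[of "marg2 _" \<nu>]
  by (auto simp: S_eps_def C_eps_def)

section \<open>Finite quantizers\<close>

lemma finite_measure_sum_fibers:
  assumes "finite_measure M" "finite K" "\<And>x. x \<in> space M \<Longrightarrow> g x \<in> K"
    and "\<And>k. k \<in> K \<Longrightarrow> g -` {k} \<inter> space M \<in> sets M" "A \<in> sets M"
  shows "(\<Sum>k\<in>K. measure M (A \<inter> g -` {k})) = measure M A"
proof -
  interpret finite_measure M by fact
  have "A \<inter> g -` {k} = A \<inter> (g -` {k} \<inter> space M)" for k
    using sets.sets_into_space[OF assms(5)] by auto
  then have "(\<Sum>k\<in>K. measure M (A \<inter> g -` {k})) = measure M (\<Union>k\<in>K. A \<inter> g -` {k})"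
    using assms by (intro finite_measure_finite_Union[symmetric]) (auto simp: disjoint_family_on_def)
  also have "(\<Union>k\<in>K. A \<inter> g -` {k}) = A"
    using assms(3) sets.sets_into_space[OF assms(5)] by auto
  finally show ?thesis .
qed

definition cell_mass :: "('z \<Rightarrow> 'k) \<Rightarrow> 'z measure \<Rightarrow> 'k \<Rightarrow> real" where
  "cell_mass q \<rho> k = measure \<rho> (q -` {k})"

lemma cell_mass_nonneg: "0 \<le> cell_mass q \<rho> k"
  by (simp add: cell_mass_def)

locale quantizer =
  fixes q :: "'z::{metric_space, second_countable_topology} \<Rightarrow> 'z" and K :: "'z set"
  assumes finite_K: "finite K" and q_in_K: "\<And>z. q z \<in> K"
    and q_measurable [measurable]: "q \<in> borel_measurable borel"
begin

lemma cell_borel [measurable]: "q -` {k} \<in> sets borel"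
  using measurable_sets[OF q_measurable, of "{k}"] by simp

lemma sum_measure_cells:
  assumes "finite_measure \<rho>" "sets \<rho> = sets borel" "A \<in> sets borel"
  shows "(\<Sum>k\<in>K. measure \<rho> (A \<inter> q -` {k})) = measure \<rho> A"
  using assms finite_K q_in_K sets_eq_borel_imp_space_UNIV[OF assms(2)]
  by (intro finite_measure_sum_fibers) auto

lemma sum_cell_mass:
  assumes "prob_space \<rho>" "sets \<rho> = sets borel"
  shows "(\<Sum>k\<in>K. cell_mass q \<rho> k) = 1"
  using sum_measure_cells[OF prob_space.axioms(1)[OF assms(1)] assms(2), of UNIV]
    prob_space.prob_space[OF assms(1)] sets_eq_borel_imp_space_UNIV[OF assms(2)]
  by (simp add: cell_mass_def)

end

fun first_center_within :: "'a::metric_space list \<Rightarrow> real \<Rightarrow> 'a \<Rightarrow> 'a" where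
  "first_center_within [] r x = x"
| "first_center_within (c # cs) r x = (if dist x c < r then c else first_center_within cs r x)"

lemma dist_first_center_within: "0 < r \<Longrightarrow> dist (first_center_within cs r x) x < r"
  by (induct cs) (auto simp: dist_commute)

lemma first_center_within_in_set: "\<exists>c\<in>set cs. dist x c < r \<Longrightarrow> first_center_within cs r x \<in> set cs"
  by (induct cs) auto

lemma first_center_within_measurable: "first_center_within cs r \<in> borel_measurable borel"
proof (induct cs)
  case (Cons c cs)
  have "{x \<in> space borel. dist x c < r} = ball c r"
    by (auto simp: dist_commute)
  then have "(\<lambda>x. if dist x c < r then c else first_center_within cs r x) \<in> borel_measurable borel"
    using Cons by (intro measurable_If) auto
  then show ?case by simp
qed simp

lemma exists_quantizer:
  assumes "compact (UNIV :: 'a set)" "0 < r"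
  obtains q :: "'a::{metric_space, second_countable_topology} \<Rightarrow> 'a" and K
  where "quantizer q K" "\<And>x. dist (q x) x < r"
proof -
  have "UNIV \<subseteq> (\<Union>c::'a. ball c r)"
    using assms(2) by (auto intro: UN_I[of _ UNIV])
  then obtain C :: "'a set" where "finite C" and C: "UNIV \<subseteq> (\<Union>c\<in>C. ball c r)"
    using compactE_image[OF assms(1), of UNIV "\<lambda>c. ball c r"] by auto
  then obtain cs where cs: "set cs = C"
    using finite_list by blast
  have "\<exists>c\<in>set cs. dist x c < r" for x
    using C cs by (fastforce simp: dist_commute)
  then have "quantizer (first_center_within cs r) (set cs)"
    by unfold_locales (auto intro: first_center_within_in_set first_center_within_measurable)
  then show ?thesis
    using that dist_first_center_within[OF assms(2)] by blast
qed

section \<open>The cost of a plan from its cell masses\<close>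

lemma esssup_ge_of_emeasure_pos:
  assumes "A \<in> sets M" "emeasure M A \<noteq> 0" "\<And>x. x \<in> A \<Longrightarrow> c \<le> f x"
  shows "c \<le> esssup M f"
proof (rule ccontr)
  assume less: "\<not> c \<le> esssup M f"
  have "AE x in M. x \<notin> A"
    using esssup_AE[of f M] by eventually_elim (use less assms(3) in \<open>meson order_trans\<close>)
  then have "emeasure M A = 0"
    using AE_iff_measurable[OF assms(1), of "\<lambda>x. x \<notin> A"] sets.sets_into_space[OF assms(1)] by auto
  with assms(2) show False ..
qed

locale quantized_cost = quantizer q K
  for q :: "'z::{metric_space, second_countable_topology} \<Rightarrow> 'z" and K +
  fixes F :: "'z \<times> 'z \<Rightarrow> real" and \<omega> :: real
  assumes F_measurable [measurable]: "F \<in> borel_measurable borel"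
    and F_nonneg: "\<And>v. 0 \<le> F v"
    and F_close: "\<And>z z'. \<bar>F (z, z') - F (q z, q z')\<bar> < \<omega>"
begin

definition discrete_cost :: "('z \<Rightarrow> real) \<Rightarrow> real" where
  "discrete_cost u = (\<Sum>k\<in>K. \<Sum>l\<in>K. F (k, l) * u k * u l)"

lemma omega_pos: "0 < \<omega>"
  using F_close[of undefined undefined] by linarith

lemma cost_le_quantized_cost: "ennreal (F v) \<le> ennreal (F (q (fst v), q (snd v))) + ennreal \<omega>"
  using F_close[of "fst v" "snd v"] F_nonneg omega_pos
  by (simp add: ennreal_plus[symmetric] del: ennreal_plus)

lemma quantized_cost_le_cost: "ennreal (F (q (fst v), q (snd v))) \<le> ennreal (F v) + ennreal \<omega>"
  using F_close[of "fst v" "snd v"] F_nonneg omega_pos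
  by (simp add: ennreal_plus[symmetric] del: ennreal_plus)

lemma discrete_cost_cell_mass_nonneg: "0 \<le> discrete_cost (cell_mass q \<rho>)"
  unfolding discrete_cost_def by (intro sum_nonneg mult_nonneg_nonneg F_nonneg cell_mass_nonneg)

lemma quantized_cost_eq_sum:
  "ennreal (F (q z, q z')) = (\<Sum>k\<in>K. \<Sum>l\<in>K. ennreal (F (k, l)) * indicator (q -` {k} \<times> q -` {l}) (z, z'))"
proof -
  have "(\<Sum>l\<in>K. ennreal (F (k, l)) * indicator (q -` {k} \<times> q -` {l}) (z, z')) =
      (if k = q z then ennreal (F (k, q z')) else 0)" for k
    using finite_K q_in_K by (simp add: indicator_def if_distrib[of "(*) _"] cong: if_cong)
  then show ?thesis
    using finite_K q_in_K by simp
qed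

context
  fixes \<rho> :: "'z measure"
  assumes prob_rho: "prob_space \<rho>" and sets_rho: "sets \<rho> = sets borel"
begin

interpretation prob_space \<rho> by (rule prob_rho)

interpretation pair: prob_space "\<rho> \<Otimes>\<^sub>M \<rho>"
  by (intro prob_space_pair prob_rho)

lemma sets_pair_rho: "sets (\<rho> \<Otimes>\<^sub>M \<rho>) = sets borel"
  by (intro sets_pair_measure_borel sets_rho)

lemma emeasure_cells_Times:
  "emeasure (\<rho> \<Otimes>\<^sub>M \<rho>) (q -` {k} \<times> q -` {l}) = ennreal (cell_mass q \<rho> k * cell_mass q \<rho> l)"
  using sets_rho by (simp add: emeasure_pair_measure_Times emeasure_eq_measure cell_mass_def ennreal_mult'')

lemma cost_measurable [measurable]: "F \<in> borel_measurable (\<rho> \<Otimes>\<^sub>M \<rho>)"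
  by (subst measurable_cong_sets[OF sets_pair_rho refl]) (rule F_measurable)

lemma quantized_cost_measurable [measurable]:
  "(\<lambda>v. F (q (fst v), q (snd v))) \<in> borel_measurable (\<rho> \<Otimes>\<^sub>M \<rho>)"
proof -
  have [measurable]: "q \<in> measurable \<rho> borel" "F \<in> borel_measurable (borel \<Otimes>\<^sub>M borel)"
    using sets_rho by (auto simp: borel_prod cong: measurable_cong_sets)
  show ?thesis by measurable
qed

lemma nn_integral_quantized_cost:
  "(\<integral>\<^sup>+v. ennreal (F (q (fst v), q (snd v))) \<partial>(\<rho> \<Otimes>\<^sub>M \<rho>)) = ennreal (discrete_cost (cell_mass q \<rho>))"
proof -
  have cells: "q -` {k} \<times> q -` {l} \<in> sets (\<rho> \<Otimes>\<^sub>M \<rho>)" for k l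
    using sets_rho by (intro pair_measureI) auto
  have "(\<integral>\<^sup>+v. ennreal (F (q (fst v), q (snd v))) \<partial>(\<rho> \<Otimes>\<^sub>M \<rho>)) =
      (\<Sum>k\<in>K. \<Sum>l\<in>K. ennreal (F (k, l)) * emeasure (\<rho> \<Otimes>\<^sub>M \<rho>) (q -` {k} \<times> q -` {l}))"
    using cells by (simp add: quantized_cost_eq_sum[of "fst _"] nn_integral_sum nn_integral_cmult_indicator)
  also have "\<dots> = (\<Sum>k\<in>K. \<Sum>l\<in>K. ennreal (F (k, l) * cell_mass q \<rho> k * cell_mass q \<rho> l))"
    by (simp add: emeasure_cells_Times ennreal_mult F_nonneg cell_mass_nonneg mult.assoc)
  also have "\<dots> = ennreal (discrete_cost (cell_mass q \<rho>))"
    unfolding discrete_cost_def by (simp add: F_nonneg cell_mass_nonneg sum_nonneg)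
  finally show ?thesis .
qed

lemma nn_integral_cost_le:
  "(\<integral>\<^sup>+v. ennreal (F v) \<partial>(\<rho> \<Otimes>\<^sub>M \<rho>)) \<le> ennreal (discrete_cost (cell_mass q \<rho>) + \<omega>)"
proof -
  have "(\<integral>\<^sup>+v. ennreal (F v) \<partial>(\<rho> \<Otimes>\<^sub>M \<rho>)) \<le>
      (\<integral>\<^sup>+v. ennreal (F (q (fst v), q (snd v))) + ennreal \<omega> \<partial>(\<rho> \<Otimes>\<^sub>M \<rho>))"
    by (intro nn_integral_mono cost_le_quantized_cost)
  also have "\<dots> = ennreal (discrete_cost (cell_mass q \<rho>)) + ennreal \<omega>"
    by (simp add: nn_integral_add nn_integral_quantized_cost pair.emeasure_space_1)
  finally show ?thesis
    using omega_pos discrete_cost_cell_mass_nonneg by simp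
qed

lemma discrete_cost_le:
  "ennreal (discrete_cost (cell_mass q \<rho>)) \<le> (\<integral>\<^sup>+v. ennreal (F v) \<partial>(\<rho> \<Otimes>\<^sub>M \<rho>)) + ennreal \<omega>"
proof -
  have "ennreal (discrete_cost (cell_mass q \<rho>)) \<le> (\<integral>\<^sup>+v. ennreal (F v) + ennreal \<omega> \<partial>(\<rho> \<Otimes>\<^sub>M \<rho>))"
    unfolding nn_integral_quantized_cost[symmetric] by (intro nn_integral_mono quantized_cost_le_cost)
  also have "\<dots> = (\<integral>\<^sup>+v. ennreal (F v) \<partial>(\<rho> \<Otimes>\<^sub>M \<rho>)) + ennreal \<omega>"
    by (simp add: nn_integral_add pair.emeasure_space_1)
  finally show ?thesis .
qed

lemma null_cells_null_set: "q -` {k \<in> K. cell_mass q \<rho> k = 0} \<in> null_sets \<rho>"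
proof -
  have "q -` {k} \<in> null_sets \<rho>" if "cell_mass q \<rho> k = 0" for k
  proof (rule null_setsI)
    show "emeasure \<rho> (q -` {k}) = 0"
      using that by (simp add: emeasure_eq_measure cell_mass_def)
    show "q -` {k} \<in> sets \<rho>"
      using sets_rho by simp
  qed
  then have "(\<Union>k\<in>{k \<in> K. cell_mass q \<rho> k = 0}. q -` {k}) \<in> null_sets \<rho>"
    using finite_K by (intro null_sets_UN' countable_finite) simp_all
  also have "(\<Union>k\<in>{k \<in> K. cell_mass q \<rho> k = 0}. q -` {k}) = q -` {k \<in> K. cell_mass q \<rho> k = 0}"
    by auto
  finally show ?thesis .
qed

lemma AE_pos_cell_masses:
  "AE v in \<rho> \<Otimes>\<^sub>M \<rho>. 0 < cell_mass q \<rho> (q (fst v)) \<and> 0 < cell_mass q \<rho> (q (snd v))"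
proof -
  define N where "N = q -` {k \<in> K. cell_mass q \<rho> k = 0}"
  have N: "N \<in> sets \<rho>" "emeasure \<rho> N = 0"
    using null_cells_null_set by (auto simp: N_def)
  have "N \<times> space \<rho> \<in> null_sets (\<rho> \<Otimes>\<^sub>M \<rho>)" "space \<rho> \<times> N \<in> null_sets (\<rho> \<Otimes>\<^sub>M \<rho>)"
    using N by (auto simp: null_sets_def emeasure_pair_measure_Times)
  then have "AE v in \<rho> \<Otimes>\<^sub>M \<rho>. v \<notin> N \<times> space \<rho> \<and> v \<notin> space \<rho> \<times> N"
    by (intro AE_conjI AE_not_in)
  then show ?thesis
  proof eventually_elim
    case (elim v)
    then have "cell_mass q \<rho> (q (fst v)) \<noteq> 0" "cell_mass q \<rho> (q (snd v)) \<noteq> 0"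
      using q_in_K sets_eq_borel_imp_space_UNIV[OF sets_rho] by (auto simp: N_def mem_Times_iff)
    then show ?case
      by (simp add: order_less_le cell_mass_nonneg)
  qed
qed

lemma esssup_cost_ge:
  assumes "0 < cell_mass q \<rho> k" "0 < cell_mass q \<rho> l"
  shows "ereal (F (k, l) - \<omega>) \<le> esssup (\<rho> \<Otimes>\<^sub>M \<rho>) (\<lambda>v. ereal (F v))"
proof (rule esssup_ge_of_emeasure_pos)
  show "q -` {k} \<times> q -` {l} \<in> sets (\<rho> \<Otimes>\<^sub>M \<rho>)"
    using sets_rho by (intro pair_measureI) auto
  show "emeasure (\<rho> \<Otimes>\<^sub>M \<rho>) (q -` {k} \<times> q -` {l}) \<noteq> 0"
    using assms by (simp add: emeasure_cells_Times)
  show "ereal (F (k, l) - \<omega>) \<le> ereal (F v)" if "v \<in> q -` {k} \<times> q -` {l}" for v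
    using that F_close[of "fst v" "snd v"] by (auto simp: mem_Times_iff)
qed

lemma esssup_cost_le:
  assumes "\<And>k l. k \<in> K \<Longrightarrow> l \<in> K \<Longrightarrow> 0 < cell_mass q \<rho> k \<Longrightarrow> 0 < cell_mass q \<rho> l \<Longrightarrow> F (k, l) \<le> t"
  shows "esssup (\<rho> \<Otimes>\<^sub>M \<rho>) (\<lambda>v. ereal (F v)) \<le> ereal (t + \<omega>)"
proof (rule esssup_I)
  show "(\<lambda>v. ereal (F v)) \<in> borel_measurable (\<rho> \<Otimes>\<^sub>M \<rho>)"
    by measurable
  show "AE v in \<rho> \<Otimes>\<^sub>M \<rho>. ereal (F v) \<le> ereal (t + \<omega>)"
    using AE_pos_cell_masses
  proof eventually_elim
    case (elim v)
    then have "F (q (fst v), q (snd v)) \<le> t"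
      using assms q_in_K by blast
    then show ?case
      using F_close[of "fst v" "snd v"] by simp
  qed
qed

end

lemma discrete_cost_tendsto:
  assumes "\<And>k. k \<in> K \<Longrightarrow> (\<lambda>n. u n k) \<longlonglongrightarrow> v k"
  shows "(\<lambda>n. discrete_cost (u n)) \<longlonglongrightarrow> discrete_cost v"
  unfolding discrete_cost_def by (intro tendsto_intros assms)

context
  fixes \<rho>s :: "nat \<Rightarrow> 'z measure" and \<rho> :: "'z measure"
  assumes prob_rhos: "\<And>n. prob_space (\<rho>s n)" and sets_rhos: "\<And>n. sets (\<rho>s n) = sets borel"
    and prob_rho: "prob_space \<rho>" and sets_rho: "sets \<rho> = sets borel"
    and cell_mass_tendsto: "\<And>k. k \<in> K \<Longrightarrow> (\<lambda>n. cell_mass q (\<rho>s n) k) \<longlonglongrightarrow> cell_mass q \<rho> k"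
begin

lemma esssup_cost_le_of_cell_mass_tendsto:
  assumes "\<And>n. esssup (\<rho>s n \<Otimes>\<^sub>M \<rho>s n) (\<lambda>v. ereal (F v)) \<le> ereal T"
  shows "esssup (\<rho> \<Otimes>\<^sub>M \<rho>) (\<lambda>v. ereal (F v)) \<le> ereal (T + 2 * \<omega>)"
proof -
  have "F (k, l) \<le> T + \<omega>"
    if "k \<in> K" "l \<in> K" "0 < cell_mass q \<rho> k" "0 < cell_mass q \<rho> l" for k l
  proof -
    have "eventually (\<lambda>n. 0 < cell_mass q (\<rho>s n) k \<and> 0 < cell_mass q (\<rho>s n) l) sequentially"
      using that by (intro eventually_conj order_tendstoD(1)[OF cell_mass_tendsto]) auto
    then obtain n where "0 < cell_mass q (\<rho>s n) k" "0 < cell_mass q (\<rho>s n) l"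
      using eventually_happens'[OF trivial_limit_sequentially] by blast
    from order_trans[OF esssup_cost_ge[OF prob_rhos sets_rhos this] assms[of n]] show ?thesis
      by simp
  qed
  then have "esssup (\<rho> \<Otimes>\<^sub>M \<rho>) (\<lambda>v. ereal (F v)) \<le> ereal (T + \<omega> + \<omega>)"
    by (intro esssup_cost_le[OF prob_rho sets_rho])
  then show ?thesis
    by (simp add: algebra_simps)
qed

lemma nn_integral_cost_le_of_cell_mass_tendsto:
  assumes "0 \<le> T" "\<And>n. (\<integral>\<^sup>+v. ennreal (F v) \<partial>(\<rho>s n \<Otimes>\<^sub>M \<rho>s n)) \<le> ennreal T"
  shows "(\<integral>\<^sup>+v. ennreal (F v) \<partial>(\<rho> \<Otimes>\<^sub>M \<rho>)) \<le> ennreal (T + 2 * \<omega>)"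
proof -
  have "discrete_cost (cell_mass q (\<rho>s n)) \<le> T + \<omega>" for n
  proof -
    have "ennreal (discrete_cost (cell_mass q (\<rho>s n))) \<le> (\<integral>\<^sup>+v. ennreal (F v) \<partial>(\<rho>s n \<Otimes>\<^sub>M \<rho>s n)) + ennreal \<omega>"
      by (rule discrete_cost_le[OF prob_rhos sets_rhos])
    also have "\<dots> \<le> ennreal T + ennreal \<omega>"
      using assms(2) by (rule add_right_mono)
    finally show ?thesis
      using assms(1) omega_pos by (simp add: ennreal_plus[symmetric] del: ennreal_plus)
  qed
  then have "discrete_cost (cell_mass q \<rho>) \<le> T + \<omega>"
    by (intro LIMSEQ_le_const2[OF discrete_cost_tendsto[OF cell_mass_tendsto]]) auto
  then have "ennreal (discrete_cost (cell_mass q \<rho>) + \<omega>) \<le> ennreal (T + 2 * \<omega>)"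
    by (intro ennreal_leI) simp
  with nn_integral_cost_le[OF prob_rho sets_rho] show ?thesis
    by (rule order_trans)
qed

end

end

section \<open>Couplings with prescribed cell masses\<close>

lemma measure_le_scaled_if_emeasure_le:
  assumes "emeasure M A \<le> ennreal c * emeasure N A" "0 \<le> c" "emeasure N A \<noteq> \<top>"
  shows "measure M A \<le> c * measure N A"
proof -
  have "measure M A \<le> enn2real (ennreal c * emeasure N A)"
    unfolding measure_def using assms
    by (intro enn2real_mono) (auto simp: ennreal_mult_eq_top_iff less_top[symmetric])
  also have "\<dots> = c * measure N A"
    using assms(2) by (simp add: enn2real_mult measure_def)
  finally show ?thesis .
qed

lemma borel_measurable_fst [measurable]:
  "fst \<in> borel_measurable (borel :: ('a::second_countable_topology \<times> 'b::second_countable_topology) measure)"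
  unfolding borel_prod[symmetric] by simp

lemma borel_measurable_snd [measurable]:
  "snd \<in> borel_measurable (borel :: ('a::second_countable_topology \<times> 'b::second_countable_topology) measure)"
  unfolding borel_prod[symmetric] by simp

lemma finite_family_convergent_subseq:
  fixes u :: "nat \<Rightarrow> 'k \<Rightarrow> real"
  assumes "finite K" "\<And>n k. k \<in> K \<Longrightarrow> u n k \<in> {0..1}"
  obtains r where "strict_mono r" "\<And>k. k \<in> K \<Longrightarrow> convergent (\<lambda>n. u (r n) k)"
proof -
  have "\<exists>r. strict_mono r \<and> (\<forall>k\<in>K. convergent (\<lambda>n. u (r n) k))"
    using assms
  proof (induct K)
    case empty
    show ?case
      by (intro exI[of _ id]) (auto simp: strict_mono_def)
  next
    case (insert k K)
    then obtain r where r: "strict_mono r" "\<forall>k\<in>K. convergent (\<lambda>n. u (r n) k)"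
      by auto
    have "\<forall>n. u (r n) k \<in> {0..1}"
      using insert(4) by blast
    then obtain l s where s: "strict_mono s" "((\<lambda>n. u (r n) k) \<circ> s) \<longlonglongrightarrow> l"
      using compact_imp_seq_compact[OF compact_Icc] by (metis seq_compactE)
    have "convergent (\<lambda>n. u (r (s n)) k')" if "k' \<in> insert k K" for k'
    proof (cases "k' = k")
      case False
      with r(2) that obtain l' where "(\<lambda>n. u (r n) k') \<longlonglongrightarrow> l'"
        by (auto simp: convergent_def)
      from LIMSEQ_subseq_LIMSEQ[OF this s(1)] show ?thesis
        by (auto simp: convergent_def o_def)
    qed (use s(2) in \<open>auto simp: convergent_def o_def\<close>)
    then show ?case
      using strict_mono_o[OF r(1) s(1)] by (auto simp: o_def)
  qed
  then show ?thesis
    using that by blast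
qed

lemma tendsto_le_of_le_scaled:
  fixes x d :: "nat \<Rightarrow> real"
  assumes "x \<longlonglongrightarrow> l" "d \<longlonglongrightarrow> 0" "\<And>n. x n \<le> (1 + d n) * c"
  shows "l \<le> c"
proof -
  have "(\<lambda>n. (1 + d n) * c) \<longlonglongrightarrow> (1 + 0) * c"
    by (intro tendsto_intros assms(2))
  then show ?thesis
    using LIMSEQ_le[OF assms(1)] assms(3) by auto
qed

locale product_quantizer = X: quantizer qX KX + Y: quantizer qY KY
  for qX :: "'a::polish_space \<Rightarrow> 'a" and KX and qY :: "'b::polish_space \<Rightarrow> 'b" and KY
begin

sublocale quantizer "map_prod qX qY" "KX \<times> KY"
proof
  show "map_prod qX qY \<in> borel_measurable borel"
    unfolding borel_prod[symmetric] map_prod_def split_beta' by measurable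
qed (auto simp: X.finite_K Y.finite_K X.q_in_K Y.q_in_K)

lemma vimage_map_prod_singleton: "map_prod qX qY -` {(a, b)} = qX -` {a} \<times> qY -` {b}"
  by auto

lemma row_cells_borel:
  "qX -` {a} \<times> (UNIV :: 'b set) \<in> sets borel" "(\<lambda>z::'a \<times> 'b. qX (fst z)) -` {a} \<in> sets borel"
proof -
  have "(\<lambda>z::'a \<times> 'b. qX (fst z)) \<in> borel_measurable borel"
    by measurable
  from measurable_sets[OF this, of "{a}"] show "(\<lambda>z::'a \<times> 'b. qX (fst z)) -` {a} \<in> sets borel"
    by simp
  moreover have "(\<lambda>z::'a \<times> 'b. qX (fst z)) -` {a} = qX -` {a} \<times> UNIV"
    by auto
  ultimately show "qX -` {a} \<times> (UNIV :: 'b set) \<in> sets borel"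
    by simp
qed

lemma col_cells_borel:
  "(UNIV :: 'a set) \<times> qY -` {b} \<in> sets borel" "(\<lambda>z::'a \<times> 'b. qY (snd z)) -` {b} \<in> sets borel"
proof -
  have "(\<lambda>z::'a \<times> 'b. qY (snd z)) \<in> borel_measurable borel"
    by measurable
  from measurable_sets[OF this, of "{b}"] show "(\<lambda>z::'a \<times> 'b. qY (snd z)) -` {b} \<in> sets borel"
    by simp
  moreover have "(\<lambda>z::'a \<times> 'b. qY (snd z)) -` {b} = UNIV \<times> qY -` {b}"
    by auto
  ultimately show "(UNIV :: 'a set) \<times> qY -` {b} \<in> sets borel"
    by simp
qed

lemma cell_mass_marg1:
  assumes "borel_prob \<rho>"
  shows "cell_mass qX (marg1 \<rho>) a = measure \<rho> (qX -` {a} \<times> UNIV)"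
proof -
  have "sets \<rho> = sets borel"
    using assms by (simp add: borel_prob_def)
  then show ?thesis
    unfolding cell_mass_def marg1_def
    by (subst measure_distr) (auto simp: sets_eq_borel_imp_space_UNIV vimage_fst cong: measurable_cong_sets)
qed

lemma cell_mass_marg2:
  assumes "borel_prob \<rho>"
  shows "cell_mass qY (marg2 \<rho>) b = measure \<rho> (UNIV \<times> qY -` {b})"
proof -
  have "sets \<rho> = sets borel"
    using assms by (simp add: borel_prob_def)
  then show ?thesis
    unfolding cell_mass_def marg2_def
    by (subst measure_distr) (auto simp: sets_eq_borel_imp_space_UNIV vimage_snd cong: measurable_cong_sets)
qed

lemma sum_cell_mass_row:
  assumes "borel_prob \<rho>"
  shows "(\<Sum>b\<in>KY. cell_mass (map_prod qX qY) \<rho> (a, b)) = cell_mass qX (marg1 \<rho>) a"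
proof -
  have sets_rho: "sets \<rho> = sets borel" and "prob_space \<rho>"
    using assms by (auto simp: borel_prob_def)
  then have "(\<Sum>b\<in>KY. measure \<rho> ((qX -` {a} \<times> UNIV) \<inter> (\<lambda>z. qY (snd z)) -` {b})) =
      measure \<rho> (qX -` {a} \<times> UNIV)"
    using Y.finite_K Y.q_in_K prob_space.axioms(1)
    by (intro finite_measure_sum_fibers) (auto simp: sets_eq_borel_imp_space_UNIV row_cells_borel col_cells_borel)
  moreover have "(qX -` {a} \<times> UNIV) \<inter> (\<lambda>z. qY (snd z)) -` {b} = map_prod qX qY -` {(a, b)}" for b
    by auto
  ultimately show ?thesis
    using cell_mass_marg1[OF assms] by (simp add: cell_mass_def)
qed

lemma sum_cell_mass_col:
  assumes "borel_prob \<rho>"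
  shows "(\<Sum>a\<in>KX. cell_mass (map_prod qX qY) \<rho> (a, b)) = cell_mass qY (marg2 \<rho>) b"
proof -
  have sets_rho: "sets \<rho> = sets borel" and "prob_space \<rho>"
    using assms by (auto simp: borel_prob_def)
  then have "(\<Sum>a\<in>KX. measure \<rho> ((UNIV \<times> qY -` {b}) \<inter> (\<lambda>z. qX (fst z)) -` {a})) =
      measure \<rho> (UNIV \<times> qY -` {b})"
    using X.finite_K X.q_in_K prob_space.axioms(1)
    by (intro finite_measure_sum_fibers) (auto simp: sets_eq_borel_imp_space_UNIV row_cells_borel col_cells_borel)
  moreover have "(UNIV \<times> qY -` {b}) \<inter> (\<lambda>z. qX (fst z)) -` {a} = map_prod qX qY -` {(a, b)}" for a
    by auto
  ultimately show ?thesis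
    using cell_mass_marg2[OF assms] by (simp add: cell_mass_def)
qed

lemma C_eps_cell_mass_marg_le:
  assumes "\<pi> \<in> C_eps \<epsilon> \<mu>X \<mu>Y" "0 \<le> fst \<epsilon>" "0 \<le> snd \<epsilon>" "prob_space \<mu>X" "prob_space \<mu>Y"
  shows "cell_mass qX (marg1 \<pi>) a \<le> (1 + fst \<epsilon>) * cell_mass qX \<mu>X a"
    and "cell_mass qY (marg2 \<pi>) b \<le> (1 + snd \<epsilon>) * cell_mass qY \<mu>Y b"
proof -
  interpret \<mu>X: prob_space \<mu>X by fact
  interpret \<mu>Y: prob_space \<mu>Y by fact
  have "emeasure \<mu>X (qX -` {a}) \<noteq> \<top>" "emeasure \<mu>Y (qY -` {b}) \<noteq> \<top>"
    by simp_all
  then show "cell_mass qX (marg1 \<pi>) a \<le> (1 + fst \<epsilon>) * cell_mass qX \<mu>X a"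
    and "cell_mass qY (marg2 \<pi>) b \<le> (1 + snd \<epsilon>) * cell_mass qY \<mu>Y b"
    using assms(1-3) unfolding cell_mass_def C_eps_def
    by (auto intro!: measure_le_scaled_if_emeasure_le)
qed

lemma C_eps_cell_mass_limit_sums_le:
  assumes "prob_space \<mu>X" "prob_space \<mu>Y"
    and e0: "\<And>n. 0 \<le> fst (e n) \<and> 0 \<le> snd (e n)" and e_lim: "e \<longlonglongrightarrow> (0, 0)"
    and \<pi>s: "\<And>n. \<pi>s n \<in> C_eps (e n) \<mu>X \<mu>Y"
    and lim: "\<And>k. k \<in> KX \<times> KY \<Longrightarrow> (\<lambda>n. cell_mass (map_prod qX qY) (\<pi>s n) k) \<longlonglongrightarrow> P k"
  shows "\<And>a. a \<in> KX \<Longrightarrow> (\<Sum>b\<in>KY. P (a, b)) \<le> cell_mass qX \<mu>X a"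
    and "\<And>b. b \<in> KY \<Longrightarrow> (\<Sum>a\<in>KX. P (a, b)) \<le> cell_mass qY \<mu>Y b"
proof -
  have bp: "borel_prob (\<pi>s n)" for n
    using \<pi>s[of n] by (simp add: C_eps_def)
  show "(\<Sum>b\<in>KY. P (a, b)) \<le> cell_mass qX \<mu>X a" if "a \<in> KX" for a
  proof (rule tendsto_le_of_le_scaled[OF _ tendsto_fst[OF e_lim, simplified]])
    show "(\<lambda>n. \<Sum>b\<in>KY. cell_mass (map_prod qX qY) (\<pi>s n) (a, b)) \<longlonglongrightarrow> (\<Sum>b\<in>KY. P (a, b))"
      using that by (intro tendsto_sum lim) auto
    show "(\<Sum>b\<in>KY. cell_mass (map_prod qX qY) (\<pi>s n) (a, b)) \<le> (1 + fst (e n)) * cell_mass qX \<mu>X a" for n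
      using C_eps_cell_mass_marg_le(1)[OF \<pi>s] e0 assms(1,2) by (simp add: sum_cell_mass_row[OF bp])
  qed
  show "(\<Sum>a\<in>KX. P (a, b)) \<le> cell_mass qY \<mu>Y b" if "b \<in> KY" for b
  proof (rule tendsto_le_of_le_scaled[OF _ tendsto_snd[OF e_lim, simplified]])
    show "(\<lambda>n. \<Sum>a\<in>KX. cell_mass (map_prod qX qY) (\<pi>s n) (a, b)) \<longlonglongrightarrow> (\<Sum>a\<in>KX. P (a, b))"
      using that by (intro tendsto_sum lim) auto
    show "(\<Sum>a\<in>KX. cell_mass (map_prod qX qY) (\<pi>s n) (a, b)) \<le> (1 + snd (e n)) * cell_mass qY \<mu>Y b" for n
      using C_eps_cell_mass_marg_le(2)[OF \<pi>s] e0 assms(1,2) by (simp add: sum_cell_mass_col[OF bp])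
  qed
qed

lemma C_eps_cell_mass_limit:
  assumes "prob_space \<mu>X" "sets \<mu>X = sets borel" "prob_space \<mu>Y" "sets \<mu>Y = sets borel"
    and e0: "\<And>n. 0 \<le> fst (e n) \<and> 0 \<le> snd (e n)" and e_lim: "e \<longlonglongrightarrow> (0, 0)"
    and \<pi>s: "\<And>n. \<pi>s n \<in> C_eps (e n) \<mu>X \<mu>Y"
  obtains r P where "strict_mono r"
    and "\<And>k. k \<in> KX \<times> KY \<Longrightarrow> (\<lambda>n. cell_mass (map_prod qX qY) (\<pi>s (r n)) k) \<longlonglongrightarrow> P k"
    and "\<And>k. k \<in> KX \<times> KY \<Longrightarrow> 0 \<le> P k"
    and "\<And>a. a \<in> KX \<Longrightarrow> (\<Sum>b\<in>KY. P (a, b)) = cell_mass qX \<mu>X a"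
    and "\<And>b. b \<in> KY \<Longrightarrow> (\<Sum>a\<in>KX. P (a, b)) = cell_mass qY \<mu>Y b"
proof -
  let ?w = "\<lambda>n. cell_mass (map_prod qX qY) (\<pi>s n)"
  have prob: "prob_space (\<pi>s n)" "sets (\<pi>s n) = sets borel" for n
    using \<pi>s[of n] by (simp_all add: C_eps_def borel_prob_def)
  have w01: "?w n k \<in> {0..1}" if "k \<in> KX \<times> KY" for n k
    using prob_space.prob_le_1[OF prob(1)] by (simp add: cell_mass_def)
  obtain r where r: "strict_mono r" "\<And>k. k \<in> KX \<times> KY \<Longrightarrow> convergent (\<lambda>n. ?w (r n) k)"
    using finite_family_convergent_subseq[of "KX \<times> KY" ?w, OF finite_K w01] by blast
  define P where "P k = lim (\<lambda>n. ?w (r n) k)" for k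
  have lim: "(\<lambda>n. ?w (r n) k) \<longlonglongrightarrow> P k" if "k \<in> KX \<times> KY" for k
    using r(2)[OF that] by (simp add: P_def convergent_LIMSEQ_iff)
  have P_nonneg: "0 \<le> P k" if "k \<in> KX \<times> KY" for k
    using lim[OF that] by (rule LIMSEQ_le_const) (simp add: cell_mass_nonneg)
  have "(\<lambda>n. e (r n)) \<longlonglongrightarrow> (0, 0)"
    using LIMSEQ_subseq_LIMSEQ[OF e_lim r(1)] by (simp add: o_def)
  note sums_le = C_eps_cell_mass_limit_sums_le[OF assms(1,3) e0 this \<pi>s lim]
  have "(\<lambda>n. \<Sum>k\<in>KX \<times> KY. ?w (r n) k) \<longlonglongrightarrow> (\<Sum>k\<in>KX \<times> KY. P k)"
    by (intro tendsto_sum lim)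
  moreover have "(\<Sum>k\<in>KX \<times> KY. ?w (r n) k) = 1" for n
    using sum_cell_mass[OF prob] .
  ultimately have "(\<Sum>k\<in>KX \<times> KY. P k) = 1"
    using LIMSEQ_unique[OF _ tendsto_const] by auto
  then have total: "(\<Sum>a\<in>KX. \<Sum>b\<in>KY. P (a, b)) = 1"
    by (simp add: sum.cartesian_product case_prod_beta')
  have "(\<Sum>b\<in>KY. P (a, b)) = cell_mass qX \<mu>X a" if "a \<in> KX" for a
    using total X.sum_cell_mass[OF assms(1,2)] sums_le(1) that X.finite_K
    by (intro sum_mono_inv[where i=a]) auto
  moreover have "(\<Sum>a\<in>KX. P (a, b)) = cell_mass qY \<mu>Y b" if "b \<in> KY" for b
    using total Y.sum_cell_mass[OF assms(3,4)] sums_le(2) that Y.finite_K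
    by (intro sum_mono_inv[where i=b]) (auto simp: sum.swap[of _ KX])
  ultimately show ?thesis
    using that r(1) lim P_nonneg by blast
qed

end

locale cell_coupling = product_quantizer qX KX qY KY
  for qX :: "'a::polish_space \<Rightarrow> 'a" and KX and qY :: "'b::polish_space \<Rightarrow> 'b" and KY +
  fixes \<mu>X :: "'a measure" and \<mu>Y :: "'b measure" and P :: "'a \<times> 'b \<Rightarrow> real"
  assumes prob_X: "prob_space \<mu>X" and sets_X: "sets \<mu>X = sets borel"
    and prob_Y: "prob_space \<mu>Y" and sets_Y: "sets \<mu>Y = sets borel"
    and P_nonneg: "\<And>a b. a \<in> KX \<Longrightarrow> b \<in> KY \<Longrightarrow> 0 \<le> P (a, b)"
    and P_row: "\<And>a. a \<in> KX \<Longrightarrow> (\<Sum>b\<in>KY. P (a, b)) = cell_mass qX \<mu>X a"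
    and P_col: "\<And>b. b \<in> KY \<Longrightarrow> (\<Sum>a\<in>KX. P (a, b)) = cell_mass qY \<mu>Y b"
begin

interpretation \<mu>X: prob_space \<mu>X by (rule prob_X)
interpretation \<mu>Y: prob_space \<mu>Y by (rule prob_Y)

text \<open>Division by zero yields 0 on cells of \<mu>X- or \<mu>Y-measure zero, where P vanishes anyway.\<close>

definition density_coeff :: "'a \<times> 'b \<Rightarrow> real" where
  "density_coeff k = P k / (cell_mass qX \<mu>X (fst k) * cell_mass qY \<mu>Y (snd k))"

definition coupling :: "('a \<times> 'b) measure" where
  "coupling = density (\<mu>X \<Otimes>\<^sub>M \<mu>Y)
     (\<lambda>z. \<Sum>k\<in>KX \<times> KY. ennreal (density_coeff k) * indicator (qX -` {fst k} \<times> qY -` {snd k}) z)"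

lemma P_eq_0_if_null_row:
  assumes "a \<in> KX" "b \<in> KY" "cell_mass qX \<mu>X a = 0"
  shows "P (a, b) = 0"
proof -
  have "P (a, b) \<le> (\<Sum>b\<in>KY. P (a, b))"
    using assms(1,2) P_nonneg Y.finite_K by (intro member_le_sum) auto
  then show ?thesis
    using assms P_row P_nonneg by (simp add: order_antisym)
qed

lemma P_eq_0_if_null_col:
  assumes "a \<in> KX" "b \<in> KY" "cell_mass qY \<mu>Y b = 0"
  shows "P (a, b) = 0"
proof -
  have "P (a, b) \<le> (\<Sum>a\<in>KX. P (a, b))"
    using assms(1,2) P_nonneg X.finite_K by (intro member_le_sum) auto
  then show ?thesis
    using assms P_col P_nonneg by (simp add: order_antisym)
qed

lemma density_coeff_nonneg: "a \<in> KX \<Longrightarrow> b \<in> KY \<Longrightarrow> 0 \<le> density_coeff (a, b)"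
  using P_nonneg by (simp add: density_coeff_def cell_mass_nonneg)

lemma density_coeff_times_cell_masses:
  assumes "a \<in> KX" "b \<in> KY"
  shows "density_coeff (a, b) * cell_mass qX \<mu>X a * cell_mass qY \<mu>Y b = P (a, b)"
  using P_eq_0_if_null_row[OF assms] P_eq_0_if_null_col[OF assms] by (auto simp: density_coeff_def)

lemma sum_density_coeff_row:
  assumes "a \<in> KX" "cell_mass qX \<mu>X a \<noteq> 0"
  shows "(\<Sum>b\<in>KY. density_coeff (a, b) * cell_mass qY \<mu>Y b) = 1"
proof -
  have "density_coeff (a, b) * cell_mass qY \<mu>Y b = P (a, b) / cell_mass qX \<mu>X a" if "b \<in> KY" for b
    using density_coeff_times_cell_masses[OF assms(1) that] assms(2) by (simp add: field_simps)
  then show ?thesis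
    using P_row[OF assms(1)] assms(2) by (simp add: sum_divide_distrib[symmetric])
qed

lemma sum_density_coeff_col:
  assumes "b \<in> KY" "cell_mass qY \<mu>Y b \<noteq> 0"
  shows "(\<Sum>a\<in>KX. density_coeff (a, b) * cell_mass qX \<mu>X a) = 1"
proof -
  have "density_coeff (a, b) * cell_mass qX \<mu>X a = P (a, b) / cell_mass qY \<mu>Y b" if "a \<in> KX" for a
    using density_coeff_times_cell_masses[OF that assms(1)] assms(2) by (simp add: field_simps)
  then show ?thesis
    using P_col[OF assms(1)] assms(2) by (simp add: sum_divide_distrib[symmetric])
qed

lemma emeasure_coupling_Times:
  assumes "A \<in> sets borel" "B \<in> sets borel"
  shows "emeasure coupling (A \<times> B) = ennreal (\<Sum>a\<in>KX. \<Sum>b\<in>KY.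
    density_coeff (a, b) * measure \<mu>X (qX -` {a} \<inter> A) * measure \<mu>Y (qY -` {b} \<inter> B))"
proof -
  have cells: "(qX -` {a} \<inter> A) \<times> (qY -` {b} \<inter> B) \<in> sets (\<mu>X \<Otimes>\<^sub>M \<mu>Y)" for a b
    using assms sets_X sets_Y by (intro pair_measureI) auto
  have "A \<times> B \<in> sets (\<mu>X \<Otimes>\<^sub>M \<mu>Y)"
    using assms sets_X sets_Y by (intro pair_measureI) auto
  moreover have "(\<lambda>z. \<Sum>k\<in>KX \<times> KY. ennreal (density_coeff k) * indicator (qX -` {fst k} \<times> qY -` {snd k}) z)
      \<in> borel_measurable (\<mu>X \<Otimes>\<^sub>M \<mu>Y)"
    using sets_X sets_Y by (intro borel_measurable_sum borel_measurable_times_ennreal borel_measurable_indicator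
        pair_measureI borel_measurable_const) auto
  ultimately have "emeasure coupling (A \<times> B) = (\<Sum>k\<in>KX \<times> KY. ennreal (density_coeff k) *
      emeasure (\<mu>X \<Otimes>\<^sub>M \<mu>Y) ((qX -` {fst k} \<inter> A) \<times> (qY -` {snd k} \<inter> B)))"
    unfolding coupling_def using cells
    by (simp add: emeasure_density sum_distrib_right nn_integral_sum mult.assoc Times_Int_Times
        indicator_inter_arith[symmetric] nn_integral_cmult_indicator)
  also have "\<dots> = (\<Sum>k\<in>KX \<times> KY. ennreal (density_coeff k *
      measure \<mu>X (qX -` {fst k} \<inter> A) * measure \<mu>Y (qY -` {snd k} \<inter> B)))"
    using density_coeff_nonneg assms sets_X sets_Y
    by (intro sum.cong refl) (auto simp: \<mu>Y.emeasure_pair_measure_Times \<mu>X.emeasure_eq_measure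
        \<mu>Y.emeasure_eq_measure ennreal_mult'' mult.assoc)
  also have "\<dots> = ennreal (\<Sum>a\<in>KX. \<Sum>b\<in>KY.
      density_coeff (a, b) * measure \<mu>X (qX -` {a} \<inter> A) * measure \<mu>Y (qY -` {b} \<inter> B))"
    using density_coeff_nonneg by (subst sum_ennreal) (auto simp: sum.cartesian_product case_prod_beta')
  finally show ?thesis .
qed

lemma emeasure_coupling_row:
  assumes "A \<in> sets borel"
  shows "emeasure coupling (A \<times> UNIV) = emeasure \<mu>X A"
proof -
  have "(\<Sum>b\<in>KY. density_coeff (a, b) * measure \<mu>X (qX -` {a} \<inter> A) * cell_mass qY \<mu>Y b) =
      measure \<mu>X (A \<inter> qX -` {a})" if "a \<in> KX" for a
  proof (cases "cell_mass qX \<mu>X a = 0")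
    case True
    then have "measure \<mu>X (qX -` {a} \<inter> A) = 0"
      using \<mu>X.finite_measure_mono[of "qX -` {a} \<inter> A" "qX -` {a}"] sets_X
      by (simp add: cell_mass_def measure_le_0_iff)
    then show ?thesis
      by (simp add: Int_commute)
  next
    case False
    have "(\<Sum>b\<in>KY. density_coeff (a, b) * measure \<mu>X (qX -` {a} \<inter> A) * cell_mass qY \<mu>Y b) =
        measure \<mu>X (qX -` {a} \<inter> A) * (\<Sum>b\<in>KY. density_coeff (a, b) * cell_mass qY \<mu>Y b)"
      by (simp add: sum_distrib_left mult_ac)
    then show ?thesis
      using sum_density_coeff_row[OF that False] by (simp add: Int_commute)
  qed
  then have "emeasure coupling (A \<times> UNIV) = ennreal (\<Sum>a\<in>KX. measure \<mu>X (A \<inter> qX -` {a}))"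
    using assms by (simp add: emeasure_coupling_Times cell_mass_def)
  also have "\<dots> = emeasure \<mu>X A"
    using X.sum_measure_cells[OF \<mu>X.finite_measure_axioms sets_X assms] by (simp add: \<mu>X.emeasure_eq_measure)
  finally show ?thesis .
qed

lemma emeasure_coupling_col:
  assumes "B \<in> sets borel"
  shows "emeasure coupling (UNIV \<times> B) = emeasure \<mu>Y B"
proof -
  have "(\<Sum>a\<in>KX. density_coeff (a, b) * cell_mass qX \<mu>X a * measure \<mu>Y (qY -` {b} \<inter> B)) =
      measure \<mu>Y (B \<inter> qY -` {b})" if "b \<in> KY" for b
  proof (cases "cell_mass qY \<mu>Y b = 0")
    case True
    then have "measure \<mu>Y (qY -` {b} \<inter> B) = 0"
      using \<mu>Y.finite_measure_mono[of "qY -` {b} \<inter> B" "qY -` {b}"] sets_Y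
      by (simp add: cell_mass_def measure_le_0_iff)
    then show ?thesis
      by (simp add: Int_commute)
  next
    case False
    have "(\<Sum>a\<in>KX. density_coeff (a, b) * cell_mass qX \<mu>X a * measure \<mu>Y (qY -` {b} \<inter> B)) =
        measure \<mu>Y (qY -` {b} \<inter> B) * (\<Sum>a\<in>KX. density_coeff (a, b) * cell_mass qX \<mu>X a)"
      by (simp add: sum_distrib_left mult_ac)
    then show ?thesis
      using sum_density_coeff_col[OF that False] by (simp add: Int_commute)
  qed
  then have "emeasure coupling (UNIV \<times> B) = ennreal (\<Sum>b\<in>KY. measure \<mu>Y (B \<inter> qY -` {b}))"
    using assms by (simp add: emeasure_coupling_Times cell_mass_def sum.swap[where A=KX and B=KY])
  also have "\<dots> = emeasure \<mu>Y B"
    using Y.sum_measure_cells[OF \<mu>Y.finite_measure_axioms sets_Y assms] by (simp add: \<mu>Y.emeasure_eq_measure)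
  finally show ?thesis .
qed

lemma sets_coupling: "sets coupling = sets borel"
  using sets_X sets_Y by (simp add: coupling_def sets_pair_measure_borel)

lemma coupling_in_couplings: "coupling \<in> couplings \<mu>X \<mu>Y"
proof -
  have space: "space coupling = UNIV"
    using sets_coupling by (rule sets_eq_borel_imp_space_UNIV)
  have [measurable]: "fst \<in> measurable coupling borel" "snd \<in> measurable coupling borel"
    using sets_coupling by (simp_all cong: measurable_cong_sets)
  have "marg1 coupling = \<mu>X"
  proof (rule measure_eqI)
    fix A assume "A \<in> sets (marg1 coupling)"
    then have "A \<in> sets borel"
      by simp
    then show "emeasure (marg1 coupling) A = emeasure \<mu>X A"
      by (simp add: marg1_def emeasure_distr space vimage_fst emeasure_coupling_row)
  qed (simp add: sets_X)
  moreover have "marg2 coupling = \<mu>Y"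
  proof (rule measure_eqI)
    fix B assume "B \<in> sets (marg2 coupling)"
    then have "B \<in> sets borel"
      by simp
    then show "emeasure (marg2 coupling) B = emeasure \<mu>Y B"
      by (simp add: marg2_def emeasure_distr space vimage_snd emeasure_coupling_col)
  qed (simp add: sets_Y)
  moreover have "prob_space coupling"
    using emeasure_coupling_row[of UNIV] \<mu>X.emeasure_space_1 sets_eq_borel_imp_space_UNIV[OF sets_X]
    by (intro prob_spaceI) (simp add: space)
  ultimately show ?thesis
    by (simp add: couplings_def borel_prob_def sets_coupling)
qed

lemma cell_mass_coupling:
  assumes "k \<in> KX \<times> KY"
  shows "cell_mass (map_prod qX qY) coupling k = P k"
proof -
  obtain a b where k: "k = (a, b)" "a \<in> KX" "b \<in> KY"
    using assms by auto
  have "qX -` {a'} \<inter> qX -` {a} = (if a' = a then qX -` {a} else {})"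
    "qY -` {b'} \<inter> qY -` {b} = (if b' = b then qY -` {b} else {})" for a' b'
    by auto
  then have "(\<Sum>a'\<in>KX. \<Sum>b'\<in>KY. density_coeff (a', b') * measure \<mu>X (qX -` {a'} \<inter> qX -` {a}) *
      measure \<mu>Y (qY -` {b'} \<inter> qY -` {b})) = density_coeff (a, b) * cell_mass qX \<mu>X a * cell_mass qY \<mu>Y b"
    using k X.finite_K Y.finite_K
    by (simp add: cell_mass_def if_distrib[of "measure _"] if_distrib[of "(*) _"] if_distrib[of "\<lambda>x. x * _"] cong: if_cong)
  then have "emeasure coupling (map_prod qX qY -` {k}) = ennreal (P k)"
    using k by (simp add: vimage_map_prod_singleton emeasure_coupling_Times density_coeff_times_cell_masses)
  then show ?thesis
    using k P_nonneg by (simp add: cell_mass_def measure_def)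
qed

end

context product_quantizer
begin

lemma C_eps_cell_masses_converge_to_coupling:
  assumes "prob_space \<mu>X" "sets \<mu>X = sets borel" "prob_space \<mu>Y" "sets \<mu>Y = sets borel"
    and "\<And>n. 0 \<le> fst (e n) \<and> 0 \<le> snd (e n)" "e \<longlonglongrightarrow> (0, 0)" "\<And>n. \<pi>s n \<in> C_eps (e n) \<mu>X \<mu>Y"
  obtains r \<pi> where "strict_mono r" "\<pi> \<in> couplings \<mu>X \<mu>Y"
    "\<And>k. k \<in> KX \<times> KY \<Longrightarrow>
      (\<lambda>n. cell_mass (map_prod qX qY) (\<pi>s (r n)) k) \<longlonglongrightarrow> cell_mass (map_prod qX qY) \<pi> k"
proof -
  obtain r P where r: "strict_mono r"
    and lim: "\<And>k. k \<in> KX \<times> KY \<Longrightarrow> (\<lambda>n. cell_mass (map_prod qX qY) (\<pi>s (r n)) k) \<longlonglongrightarrow> P k"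
    and P: "\<And>k. k \<in> KX \<times> KY \<Longrightarrow> 0 \<le> P k"
      "\<And>a. a \<in> KX \<Longrightarrow> (\<Sum>b\<in>KY. P (a, b)) = cell_mass qX \<mu>X a"
      "\<And>b. b \<in> KY \<Longrightarrow> (\<Sum>a\<in>KX. P (a, b)) = cell_mass qY \<mu>Y b"
    using C_eps_cell_mass_limit[OF assms] by blast
  interpret cell_coupling qX KX qY KY \<mu>X \<mu>Y P
    using product_quantizer_axioms assms P by (simp add: cell_coupling_def cell_coupling_axioms_def)
  show ?thesis
    using that[OF r coupling_in_couplings] lim cell_mass_coupling by simp
qed

end

lemma exists_product_quantizer_close:
  fixes F :: "('a::polish_space \<times> 'b::polish_space) \<times> ('a \<times> 'b) \<Rightarrow> real"
  assumes "compact (UNIV :: 'a set)" "compact (UNIV :: 'b set)" "continuous_on UNIV F" "0 < \<omega>"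
  obtains qX KX qY KY where "product_quantizer qX KX qY KY"
    "\<And>z z'. \<bar>F (z, z') - F (map_prod qX qY z, map_prod qX qY z')\<bar> < \<omega>"
proof -
  have "compact (UNIV :: (('a \<times> 'b) \<times> ('a \<times> 'b)) set)"
    using compact_Times[OF compact_Times[OF assms(1,2)] compact_Times[OF assms(1,2)]] by simp
  with assms(3) have "uniformly_continuous_on UNIV F"
    by (rule compact_uniformly_continuous)
  then obtain \<delta> where "0 < \<delta>" and \<delta>: "\<And>v v'. dist v' v < \<delta> \<Longrightarrow> dist (F v') (F v) < \<omega>"
    using uniformly_continuous_onE[OF _ assms(4)] by (metis UNIV_I)
  have "0 < \<delta> / 4"
    using \<open>0 < \<delta>\<close> by simp
  obtain qX :: "'a \<Rightarrow> 'a" and KX where qX: "quantizer qX KX" "\<And>x. dist (qX x) x < \<delta> / 4"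
    using exists_quantizer[OF assms(1) \<open>0 < \<delta> / 4\<close>] by blast
  obtain qY :: "'b \<Rightarrow> 'b" and KY where qY: "quantizer qY KY" "\<And>y. dist (qY y) y < \<delta> / 4"
    using exists_quantizer[OF assms(2) \<open>0 < \<delta> / 4\<close>] by blast
  have dist_pair: "dist (a, b) (c, d) \<le> dist a c + dist b d" for a c :: "'c::metric_space" and b d :: "'d::metric_space"
    by (simp add: dist_Pair_Pair sqrt_sum_squares_le_sum)
  have half: "dist (map_prod qX qY z) z < \<delta> / 2" for z
  proof (cases z)
    case (Pair x y)
    then show ?thesis
      using dist_pair[of "qX x" "qY y" x y] qX(2)[of x] qY(2)[of y] by simp
  qed
  have "dist (map_prod qX qY z, map_prod qX qY z') (z, z') < \<delta>" for z z'
    using dist_pair[of "map_prod qX qY z" "map_prod qX qY z'" z z'] half[of z] half[of z'] by linarith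
  then have "\<bar>F (z, z') - F (map_prod qX qY z, map_prod qX qY z')\<bar> < \<omega>" for z z'
    using \<delta> by (metis dist_real_def abs_minus_commute)
  moreover have "product_quantizer qX KX qY KY"
    using qX(1) qY(1) by (simp add: product_quantizer_def)
  ultimately show ?thesis
    using that by blast
qed

lemma C_eps_limit_quantized_coupling:
  fixes F :: "('a::polish_space \<times> 'b::polish_space) \<times> ('a \<times> 'b) \<Rightarrow> real"
    and \<mu>X :: "'a measure" and \<mu>Y :: "'b measure"
  assumes "compact_pmm_space \<mu>X" "compact_pmm_space \<mu>Y" "continuous_on UNIV F" "\<And>v. 0 \<le> F v" "0 < \<omega>"
    and "\<And>n. 0 \<le> fst (e n) \<and> 0 \<le> snd (e n)" "e \<longlonglongrightarrow> (0, 0)" "\<And>n. \<pi>s n \<in> C_eps (e n) \<mu>X \<mu>Y"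
  obtains q K r \<pi> where "quantized_cost q K F \<omega>" "strict_mono r" "\<pi> \<in> couplings \<mu>X \<mu>Y"
    "\<And>k. k \<in> K \<Longrightarrow> (\<lambda>n. cell_mass q (\<pi>s (r n)) k) \<longlonglongrightarrow> cell_mass q \<pi> k"
proof -
  note X = compact_pmm_spaceD[OF assms(1)] and Y = compact_pmm_spaceD[OF assms(2)]
  obtain qX KX qY KY where pq: "product_quantizer qX KX qY KY"
    and close: "\<And>z z'. \<bar>F (z, z') - F (map_prod qX qY z, map_prod qX qY z')\<bar> < \<omega>"
    using exists_product_quantizer_close[OF X(3) Y(3) assms(3,5)] by blast
  interpret product_quantizer qX KX qY KY
    by (rule pq)
  have "quantized_cost (map_prod qX qY) (KX \<times> KY) F \<omega>"
    using quantizer_axioms close assms(4) borel_measurable_continuous_onI[OF assms(3)]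
    by (simp add: quantized_cost_def quantized_cost_axioms_def)
  moreover obtain r \<pi> where "strict_mono r" "\<pi> \<in> couplings \<mu>X \<mu>Y"
    "\<And>k. k \<in> KX \<times> KY \<Longrightarrow>
      (\<lambda>n. cell_mass (map_prod qX qY) (\<pi>s (r n)) k) \<longlonglongrightarrow> cell_mass (map_prod qX qY) \<pi> k"
    using C_eps_cell_masses_converge_to_coupling[OF X(1,2) Y(1,2) assms(6-8)] by blast
  ultimately show ?thesis
    using that by blast
qed

lemma couplings_borel_probD: "\<pi> \<in> couplings \<mu> \<nu> \<Longrightarrow> prob_space \<pi> \<and> sets \<pi> = sets borel"
  by (simp add: couplings_def borel_prob_def)

lemma C_eps_borel_probD: "\<pi> \<in> C_eps \<epsilon> \<mu> \<nu> \<Longrightarrow> prob_space \<pi> \<and> sets \<pi> = sets borel"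
  by (simp add: C_eps_def borel_prob_def)

lemma exists_coupling_esssup_cost_le:
  fixes F :: "('a::polish_space \<times> 'b::polish_space) \<times> ('a \<times> 'b) \<Rightarrow> real"
    and \<mu>X :: "'a measure" and \<mu>Y :: "'b measure"
  assumes "compact_pmm_space \<mu>X" "compact_pmm_space \<mu>Y" "continuous_on UNIV F" "\<And>v. 0 \<le> F v"
    and "\<And>n. 0 \<le> fst (e n) \<and> 0 \<le> snd (e n)" "e \<longlonglongrightarrow> (0, 0)" "\<And>n. \<pi>s n \<in> C_eps (e n) \<mu>X \<mu>Y"
    and "\<And>n. esssup (\<pi>s n \<Otimes>\<^sub>M \<pi>s n) (\<lambda>v. ereal (F v)) \<le> ereal T" "T < T'"
  shows "\<exists>\<pi>\<in>couplings \<mu>X \<mu>Y. esssup (\<pi> \<Otimes>\<^sub>M \<pi>) (\<lambda>v. ereal (F v)) \<le> ereal T'"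
proof -
  define \<omega> where "\<omega> = (T' - T) / 2"
  have "0 < \<omega>" and T': "T' = T + 2 * \<omega>"
    using assms(9) by (simp_all add: \<omega>_def field_simps)
  obtain q K r \<pi> where "quantized_cost q K F \<omega>" "strict_mono r" "\<pi> \<in> couplings \<mu>X \<mu>Y"
    "\<And>k. k \<in> K \<Longrightarrow> (\<lambda>n. cell_mass q (\<pi>s (r n)) k) \<longlonglongrightarrow> cell_mass q \<pi> k"
    using C_eps_limit_quantized_coupling[OF assms(1-4) \<open>0 < \<omega>\<close> assms(5-7)] by blast
  with assms(7,8) have "esssup (\<pi> \<Otimes>\<^sub>M \<pi>) (\<lambda>v. ereal (F v)) \<le> ereal T'"
    unfolding T' by (intro quantized_cost.esssup_cost_le_of_cell_mass_tendsto[where \<rho>s="\<lambda>n. \<pi>s (r n)"])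
       (auto dest: C_eps_borel_probD couplings_borel_probD)
  with \<open>\<pi> \<in> couplings \<mu>X \<mu>Y\<close> show ?thesis
    by auto
qed

lemma exists_coupling_nn_integral_cost_le:
  fixes F :: "('a::polish_space \<times> 'b::polish_space) \<times> ('a \<times> 'b) \<Rightarrow> real"
    and \<mu>X :: "'a measure" and \<mu>Y :: "'b measure"
  assumes "compact_pmm_space \<mu>X" "compact_pmm_space \<mu>Y" "continuous_on UNIV F" "\<And>v. 0 \<le> F v"
    and "\<And>n. 0 \<le> fst (e n) \<and> 0 \<le> snd (e n)" "e \<longlonglongrightarrow> (0, 0)" "\<And>n. \<pi>s n \<in> C_eps (e n) \<mu>X \<mu>Y"
    and "\<And>n. (\<integral>\<^sup>+v. ennreal (F v) \<partial>(\<pi>s n \<Otimes>\<^sub>M \<pi>s n)) \<le> ennreal T" "0 \<le> T" "T < T'"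
  shows "\<exists>\<pi>\<in>couplings \<mu>X \<mu>Y. (\<integral>\<^sup>+v. ennreal (F v) \<partial>(\<pi> \<Otimes>\<^sub>M \<pi>)) \<le> ennreal T'"
proof -
  define \<omega> where "\<omega> = (T' - T) / 2"
  have "0 < \<omega>" and T': "T' = T + 2 * \<omega>"
    using assms(10) by (simp_all add: \<omega>_def field_simps)
  obtain q K r \<pi> where "quantized_cost q K F \<omega>" "strict_mono r" "\<pi> \<in> couplings \<mu>X \<mu>Y"
    "\<And>k. k \<in> K \<Longrightarrow> (\<lambda>n. cell_mass q (\<pi>s (r n)) k) \<longlonglongrightarrow> cell_mass q \<pi> k"
    using C_eps_limit_quantized_coupling[OF assms(1-4) \<open>0 < \<omega>\<close> assms(5-7)] by blast
  with assms(7-9) have "(\<integral>\<^sup>+v. ennreal (F v) \<partial>(\<pi> \<Otimes>\<^sub>M \<pi>)) \<le> ennreal T'"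
    unfolding T' by (intro quantized_cost.nn_integral_cost_le_of_cell_mass_tendsto[where \<rho>s="\<lambda>n. \<pi>s (r n)"])
       (auto dest: C_eps_borel_probD couplings_borel_probD)
  with \<open>\<pi> \<in> couplings \<mu>X \<mu>Y\<close> show ?thesis
    by auto
qed

section \<open>Convergence of PGW and sPGW\<close>

lemma distortion_nonneg: "0 \<le> distortion z"
  by (simp add: distortion_def)

lemma continuous_on_distortion: "continuous_on UNIV distortion"
  unfolding distortion_def[abs_def] by (intro continuous_intros)

lemma Lp_distortion_top: "Lp_distortion \<pi> \<top> = esssup (\<pi> \<Otimes>\<^sub>M \<pi>) (\<lambda>z. ereal (distortion z))"
  by (simp add: Lp_distortion_def)

lemma Lp_distortion_nonneg:
  assumes "p \<noteq> \<top>"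
  shows "0 \<le> Lp_distortion \<pi> p"
  using assms by (simp add: Lp_distortion_def Let_def)

lemma powr_inverse_le_iff:
  fixes x T q :: real
  assumes "0 \<le> x" "0 \<le> T" "0 < q"
  shows "x powr (1 / q) \<le> T \<longleftrightarrow> x \<le> T powr q"
proof
  assume "x powr (1 / q) \<le> T"
  then have "(x powr (1 / q)) powr q \<le> T powr q"
    using assms by (intro powr_mono2) auto
  then show "x \<le> T powr q"
    using assms by (simp add: powr_powr)
next
  assume "x \<le> T powr q"
  then have "x powr (1 / q) \<le> (T powr q) powr (1 / q)"
    using assms by (intro powr_mono2) auto
  then show "x powr (1 / q) \<le> T"
    using assms by (simp add: powr_powr)
qed

lemma Lp_distortion_le_iff:
  assumes "p \<noteq> \<top>" "1 \<le> p" "0 \<le> T"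
  shows "Lp_distortion \<pi> p \<le> ereal T \<longleftrightarrow>
    (\<integral>\<^sup>+z. ennreal (distortion z powr enn2real p) \<partial>(\<pi> \<Otimes>\<^sub>M \<pi>)) \<le> ennreal (T powr enn2real p)"
proof -
  define I where "I = (\<integral>\<^sup>+z. ennreal (distortion z powr enn2real p) \<partial>(\<pi> \<Otimes>\<^sub>M \<pi>))"
  have q: "1 \<le> enn2real p"
    using assms(1,2) enn2real_mono[of 1 p] by (simp add: less_top)
  have "Lp_distortion \<pi> p \<le> ereal T \<longleftrightarrow> I \<noteq> \<top> \<and> enn2real I powr (1 / enn2real p) \<le> T"
    using assms(1) by (simp add: Lp_distortion_def Let_def I_def[symmetric])
  also have "\<dots> \<longleftrightarrow> I \<noteq> \<top> \<and> enn2real I \<le> T powr enn2real p"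
    using q assms(3) powr_inverse_le_iff[of "enn2real I" T "enn2real p"] by auto
  also have "\<dots> \<longleftrightarrow> I \<le> ennreal (T powr enn2real p)"
    using assms(3) by (cases I rule: ennreal_cases) (auto simp: top_unique)
  finally show ?thesis
    by (simp add: I_def)
qed

lemma exists_coupling_Lp_distortion_le:
  fixes \<mu>X :: "'a::polish_space measure" and \<mu>Y :: "'b::polish_space measure"
  assumes "1 \<le> p" "compact_pmm_space \<mu>X" "compact_pmm_space \<mu>Y"
    and "\<And>n. 0 \<le> fst (e n) \<and> 0 \<le> snd (e n)" "e \<longlonglongrightarrow> (0, 0)" "\<And>n. \<pi>s n \<in> C_eps (e n) \<mu>X \<mu>Y"
    and "\<And>n. Lp_distortion (\<pi>s n) p \<le> ereal T" "T < T'"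
  shows "\<exists>\<pi>\<in>couplings \<mu>X \<mu>Y. Lp_distortion \<pi> p \<le> ereal T'"
proof (cases "p = \<top>")
  case True
  then show ?thesis
    using exists_coupling_esssup_cost_le[OF assms(2,3) continuous_on_distortion distortion_nonneg assms(4-6),
        of T T'] assms(7,8) by (simp add: Lp_distortion_top)
next
  case False
  define q where "q = enn2real p"
  have "1 \<le> q"
    using assms(1) False enn2real_mono[of 1 p] by (simp add: q_def less_top)
  have "0 \<le> T"
    using order_trans[OF Lp_distortion_nonneg[OF False] assms(7)] by simp
  then have "T powr q < T' powr q"
    using \<open>1 \<le> q\<close> assms(8) by (intro powr_less_mono2) auto
  have "continuous_on UNIV (\<lambda>z. distortion z powr q)"
    using \<open>1 \<le> q\<close> distortion_nonneg by (intro continuous_on_powr' continuous_on_distortion continuous_on_const) auto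
  moreover have "(\<integral>\<^sup>+z. ennreal (distortion z powr q) \<partial>(\<pi>s n \<Otimes>\<^sub>M \<pi>s n)) \<le> ennreal (T powr q)" for n
    using Lp_distortion_le_iff[OF False assms(1) \<open>0 \<le> T\<close>, THEN iffD1, OF assms(7)] by (simp add: q_def)
  ultimately obtain \<pi> where "\<pi> \<in> couplings \<mu>X \<mu>Y"
    "(\<integral>\<^sup>+z. ennreal (distortion z powr q) \<partial>(\<pi> \<Otimes>\<^sub>M \<pi>)) \<le> ennreal (T' powr q)"
    using exists_coupling_nn_integral_cost_le[OF assms(2,3) _ _ assms(4-6) _ _ \<open>T powr q < T' powr q\<close>]
    by fastforce
  moreover have "0 \<le> T'"
    using \<open>0 \<le> T\<close> assms(8) by simp
  ultimately show ?thesis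
    using Lp_distortion_le_iff[OF False assms(1)] by (auto simp: q_def)
qed

lemma GW_le_of_C_eps_sequence:
  fixes \<mu>X :: "'a::polish_space measure" and \<mu>Y :: "'b::polish_space measure"
  assumes "1 \<le> p" "compact_pmm_space \<mu>X" "compact_pmm_space \<mu>Y"
    and "\<And>n. 0 \<le> fst (e n) \<and> 0 \<le> snd (e n)" "e \<longlonglongrightarrow> (0, 0)" "\<And>n. \<pi>s n \<in> C_eps (e n) \<mu>X \<mu>Y"
    and "\<And>n. Lp_distortion (\<pi>s n) p \<le> ereal T"
  shows "GW p \<mu>X \<mu>Y \<le> ereal T"
proof (rule ereal_le_epsilon2)
  fix \<delta> :: real assume "0 < \<delta>"
  then obtain \<pi> where "\<pi> \<in> couplings \<mu>X \<mu>Y" "Lp_distortion \<pi> p \<le> ereal (T + \<delta>)"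
    using exists_coupling_Lp_distortion_le[OF assms, of "T + \<delta>"] by auto
  then show "GW p \<mu>X \<mu>Y \<le> ereal T + ereal \<delta>"
    unfolding GW_def by (auto intro: INF_lower2)
qed

lemma frequently_sequentially_imp_subseq:
  assumes "frequently P sequentially"
  obtains r :: "nat \<Rightarrow> nat" where "strict_mono r" "\<And>n. P (r n)"
  using infinite_enumerate[of "{n. P n}"] assms
  by (auto simp: cofinite_eq_sequentially[symmetric] frequently_cofinite)

lemma PGW_eventually_gt:
  fixes \<mu>X :: "'a::polish_space measure" and \<mu>Y :: "'b::polish_space measure"
  assumes "1 \<le> p" "compact_pmm_space \<mu>X" "compact_pmm_space \<mu>Y"
    and "\<And>n. 0 \<le> fst (\<epsilon> n) \<and> 0 \<le> snd (\<epsilon> n)" "\<epsilon> \<longlonglongrightarrow> (0, 0)" "a < GW p \<mu>X \<mu>Y"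
  shows "eventually (\<lambda>n. a < PGW (\<epsilon> n) p \<mu>X \<mu>Y) sequentially"
proof (rule ccontr)
  obtain z :: real where "a < ereal z" "ereal z < GW p \<mu>X \<mu>Y"
    using ereal_dense2[OF assms(6)] by blast
  assume "\<not> ?thesis"
  then have "frequently (\<lambda>n. PGW (\<epsilon> n) p \<mu>X \<mu>Y \<le> a) sequentially"
    by (simp add: not_eventually not_less)
  then obtain s :: "nat \<Rightarrow> nat" where s: "strict_mono s" "\<And>k. PGW (\<epsilon> (s k)) p \<mu>X \<mu>Y \<le> a"
    by (metis frequently_sequentially_imp_subseq)
  have "\<exists>\<pi>\<in>C_eps (\<epsilon> (s k)) \<mu>X \<mu>Y. Lp_distortion \<pi> p < ereal z" for k
    using order.strict_trans1[OF s(2)[of k] \<open>a < ereal z\<close>] unfolding PGW_def by (simp add: INF_less_iff)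
  then obtain \<pi>s where "\<And>k. \<pi>s k \<in> C_eps (\<epsilon> (s k)) \<mu>X \<mu>Y" "\<And>k. Lp_distortion (\<pi>s k) p \<le> ereal z"
    by (metis less_imp_le)
  moreover have "(\<lambda>k. \<epsilon> (s k)) \<longlonglongrightarrow> (0, 0)"
    using LIMSEQ_subseq_LIMSEQ[OF assms(5) s(1)] by (simp add: o_def)
  ultimately have "GW p \<mu>X \<mu>Y \<le> ereal z"
    using assms(4) by (intro GW_le_of_C_eps_sequence[OF assms(1-3)])
  with \<open>ereal z < GW p \<mu>X \<mu>Y\<close> show False
    by simp
qed

theorem theorem2p14:
  fixes p :: ennreal
    and \<epsilon> :: "nat \<Rightarrow> real \<times> real"
    and \<mu>X :: "'a::polish_space measure"
    and \<mu>Y :: "'b::polish_space measure"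
  assumes "1 \<le> p"
    and "\<And>n. 0 \<le> fst (\<epsilon> n) \<and> 0 \<le> snd (\<epsilon> n)"
    and "\<epsilon> \<longlonglongrightarrow> (0, 0)"
    and "compact_pmm_space \<mu>X"
    and "compact_pmm_space \<mu>Y"
  shows "(\<lambda>n. PGW (\<epsilon> n) p \<mu>X \<mu>Y) \<longlonglongrightarrow> GW p \<mu>X \<mu>Y \<and>
         (\<lambda>n. sPGW (\<epsilon> n) p \<mu>X \<mu>Y) \<longlonglongrightarrow> GW p \<mu>X \<mu>Y"
proof -
  note X = compact_pmm_spaceD[OF assms(4)] and Y = compact_pmm_spaceD[OF assms(5)]
  have PGW_le_sPGW: "PGW (\<epsilon> n) p \<mu>X \<mu>Y \<le> sPGW (\<epsilon> n) p \<mu>X \<mu>Y" for n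
    unfolding PGW_def sPGW_def using S_eps_subset_C_eps[OF X(2) Y(2) X(1) Y(1)] by (rule INF_superset_mono) simp
  have sPGW_le_GW: "sPGW (\<epsilon> n) p \<mu>X \<mu>Y \<le> GW p \<mu>X \<mu>Y" for n
    unfolding sPGW_def GW_def using couplings_subset_S_eps[OF _ _ X(1) Y(1)] assms(2)
    by (intro INF_superset_mono) auto
  have PGW: "(\<lambda>n. PGW (\<epsilon> n) p \<mu>X \<mu>Y) \<longlonglongrightarrow> GW p \<mu>X \<mu>Y"
  proof (rule order_tendstoI)
    show "eventually (\<lambda>n. a < PGW (\<epsilon> n) p \<mu>X \<mu>Y) sequentially" if "a < GW p \<mu>X \<mu>Y" for a
      using PGW_eventually_gt[OF assms(1,4,5,2,3) that] .
    show "eventually (\<lambda>n. PGW (\<epsilon> n) p \<mu>X \<mu>Y < a) sequentially" if "GW p \<mu>X \<mu>Y < a" for a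
      using order.strict_trans1[OF order_trans[OF PGW_le_sPGW sPGW_le_GW] that] by (simp add: always_eventually)
  qed
  moreover have "(\<lambda>n. sPGW (\<epsilon> n) p \<mu>X \<mu>Y) \<longlonglongrightarrow> GW p \<mu>X \<mu>Y"
    by (intro tendsto_sandwich[OF _ _ PGW tendsto_const]) (simp_all add: always_eventually PGW_le_sPGW sPGW_le_GW)
  ultimately show ?thesis ..
qed

end
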